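(* For any $p\in\mathbb{P}^1\setminus\{\infty\}$ there is a sequence $(g_n)_{n}$ in $H(\mathbb{Z})$ such that $g_n q$ converges to $\infty$ uniformly for $q$ in compact subsets of $\mathbb{P}^1\setminus\{p\}$.
   Context: Let $\mathbb{P}^1=\mathbb{P}^1(\mathbb{R})$ with its usual topology (a circle) and the natural action of $\mathrm{PSL}_2(\mathbb{R})$. Let $G$ be the group of homeomorphisms of $\mathbb{P}^1$ which are piecewise in $\mathrm{PSL}_2(\mathbb{R})$ with finitely many pieces, each an interval. Let $\infty\in\mathbb{P}^1$ correspond to the first basis vector of $\mathbb{R}^2$ and $H<G$ its stabilizer. Let $P_{\mathbb{Z}}$ be the set of fixed points of hyperbolic elements (trace of absolute value $>2$) of $\mathrm{PSL}_2(\mathbb{Z})$, $G(\mathbb{Z})$ the subgroup of $G$ of elements piecewise in $\mathrm{PSL}_2(\mathbb{Z})$ with all interval endpoints in $P_{\mathbb{Z}}$, and $H(\mathbb{Z})=G(\mathbb{Z})\cap H$. *)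

theory Defs
  imports "HOL-Analysis.Analysis"
begin

(* Model of P^1(R): the unit circle in the complex plane.  The line spanned by a
   nonzero vector (u,v) in R^2 corresponds to the point (u+iv)^2/|u+iv|^2.
   This is a homeomorphism P^1(R) -> S^1, so the topology is the usual one. *)

definition P1 :: "complex set" where
  "P1 = sphere 0 1"

definition line_point :: "real \<Rightarrow> real \<Rightarrow> complex" where
  "line_point u v = (Complex u v)^2 / complex_of_real ((cmod (Complex u v))^2)"

definition pinf :: complex where
  "pinf = line_point 1 0"

(* natural action of the matrix (a b; c d) on lines: choose a spanning vector
   w = csqrt z of the line z, apply the matrix, take the line of the image *)
definition pact :: "real \<Rightarrow> real \<Rightarrow> real \<Rightarrow> real \<Rightarrow> complex \<Rightarrow> complex" where
  "pact a b c d z = (let w = csqrt z in line_point (a * Re w + b * Im w) (c * Re w + d * Im w))"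

definition P_Z :: "complex set" where
  "P_Z = {z \<in> P1. \<exists>a b c d :: int. a * d - b * c = 1 \<and> \<bar>a + d\<bar> > 2 \<and>
            pact (of_int a) (of_int b) (of_int c) (of_int d) z = z}"

(* The pieces are the
   (closures of the) connected components of P^1 minus the finite set B of endpoints. *)
definition G_Z :: "(complex \<Rightarrow> complex) set" where
  "G_Z = {g. (\<exists>g'. homeomorphism P1 P1 g g') \<and>
             (\<exists>B. finite B \<and> B \<subseteq> P_Z \<and>
                (\<forall>C \<in> components (P1 - B). \<exists>a b c d :: int. a * d - b * c = 1 \<and>
                    (\<forall>z \<in> C. g z = pact (of_int a) (of_int b) (of_int c) (of_int d) z)))}"

definition H_Z :: "(complex \<Rightarrow> complex) set" where
  "H_Z = {g \<in> G_Z. g pinf = pinf}"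

end

theory Submission
  imports Defs
begin

text \<open>In the affine chart \<open>x \<mapsto> [x : 1]\<close> of \<open>\<bbbP>\<^sup>1\<close> the point \<open>\<infinity>\<close> is the point at
  infinity of \<open>\<real>\<close> and \<open>p\<close> is a real number \<open>p0\<close>. Conjugating the composition of a parabolic
  map fixing \<open>0\<close> with an integer translation by a translation with denominator \<open>4n\<close> gives a
  hyperbolic element of \<open>PSL\<^sub>2(\<int>)\<close> with fixed points \<open>p0 < r1 < p0 + 1/n\<close> and \<open>r2 \<ge> n\<close>
  which maps \<open>[p0 + 1/n, r2]\<close> beyond \<open>n\<close>. Acting by it on \<open>[r1, r2]\<close>, by the mirror image
  of the analogous element for \<open>-p0\<close> on an interval left of \<open>p0\<close>, and by the identity
  elsewhere gives an element of \<open>H(\<int>)\<close>: its breakpoints are the fixed points, hence lie in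
  \<open>P\<^sub>\<int>\<close>. It sends every point at distance at least \<open>1/n\<close> from \<open>p0\<close> to a point of modulus
  at least \<open>n\<close>, that is, to within \<open>4/n\<close> of \<open>\<infinity>\<close> on the circle; and a compact set avoiding
  \<open>p\<close> stays at positive distance from \<open>p0\<close>.\<close>

section \<open>Lines, the affine chart and integral Moebius maps\<close>

definition chart :: "real \<Rightarrow> complex" where
  "chart x = line_point x 1"

definition chart_coord :: "complex \<Rightarrow> real" where
  "chart_coord z = Im z / (1 - Re z)"

definition moebius_real :: "real \<Rightarrow> real \<Rightarrow> real \<Rightarrow> real \<Rightarrow> real \<Rightarrow> real" where
  "moebius_real a b c d x = (a * x + b) / (c * x + d)"

abbreviation pact_int :: "int \<Rightarrow> int \<Rightarrow> int \<Rightarrow> int \<Rightarrow> complex \<Rightarrow> complex" where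
  "pact_int a b c d \<equiv> pact (of_int a) (of_int b) (of_int c) (of_int d)"

abbreviation moebius_int :: "int \<Rightarrow> int \<Rightarrow> int \<Rightarrow> int \<Rightarrow> real \<Rightarrow> real" where
  "moebius_int a b c d \<equiv> moebius_real (of_int a) (of_int b) (of_int c) (of_int d)"

lemma line_point_scale:
  assumes "l \<noteq> 0"
  shows "line_point (l * u) (l * v) = line_point u v"
proof -
  have scale: "Complex (l * u) (l * v) = complex_of_real l * Complex u v"
    by (simp add: complex_eq_iff)
  show ?thesis
  proof (cases "Complex u v = 0")
    case True
    then show ?thesis unfolding line_point_def scale by simp
  next
    case False
    then show ?thesis unfolding line_point_def scale using assms
      by (simp add: norm_mult power_mult_distrib field_simps)
  qed
qed

lemma line_point_in_P1:
  assumes "(u, v) \<noteq> (0, 0)"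
  shows "line_point u v \<in> P1"
proof -
  have "cmod (Complex u v) \<noteq> 0" using assms by (auto simp: complex_eq_iff)
  then show ?thesis unfolding P1_def line_point_def
    by (simp add: norm_divide norm_power)
qed

lemma P1_obtain_line_point:
  assumes "z \<in> P1"
  obtains u v where "z = line_point u v" "(u, v) \<noteq> (0, 0)"
proof
  have norm_z: "cmod z = 1" using assms by (simp add: P1_def)
  have root: "Complex (Re (csqrt z)) (Im (csqrt z)) = csqrt z" by (simp add: complex_eq_iff)
  have "(cmod (csqrt z))^2 = 1" using norm_z by (metis norm_power power2_csqrt)
  then show "z = line_point (Re (csqrt z)) (Im (csqrt z))"
    unfolding line_point_def root by (simp add: power2_csqrt)
  show "(Re (csqrt z), Im (csqrt z)) \<noteq> (0, 0)" using norm_z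
    by (metis complex_eq_iff norm_zero power2_csqrt prod.inject zero_complex.sel zero_neq_one zero_power2)
qed

lemma pact_line_point:
  assumes "(u, v) \<noteq> (0, 0)"
  shows "pact a b c d (line_point u v) = line_point (a * u + b * v) (c * u + d * v)"
proof -
  define w where "w = Complex u v"
  define r where "r = cmod w"
  have "r > 0" using assms by (auto simp: r_def w_def complex_eq_iff)
  have "line_point u v = (w / of_real r)^2"
    unfolding line_point_def w_def[symmetric] r_def[symmetric] by (simp add: power_divide)
  then have "(csqrt (line_point u v))^2 = (w / of_real r)^2" by (simp add: power2_csqrt)
  then obtain s :: real where s: "s = 1 \<or> s = -1"
    and root: "csqrt (line_point u v) = of_real s * (w / of_real r)"
    unfolding power2_eq_iff by (metis mult_minus_left mult_1 of_real_1 of_real_minus)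
  have "Re (csqrt (line_point u v)) = (s / r) * u" "Im (csqrt (line_point u v)) = (s / r) * v"
    unfolding root w_def by (simp_all add: Re_divide_of_real Im_divide_of_real)
  moreover have "s / r \<noteq> 0" using s \<open>r > 0\<close> by auto
  ultimately show ?thesis unfolding pact_def Let_def
    using line_point_scale[of "s / r" "a * u + b * v" "c * u + d * v"] by (simp add: algebra_simps)
qed

lemma invertible_image_nonzero:
  fixes a b c d u v :: real
  assumes "a * d - b * c \<noteq> 0" "(u, v) \<noteq> (0, 0)"
  shows "(a * u + b * v, c * u + d * v) \<noteq> (0, 0)"
proof
  assume "(a * u + b * v, c * u + d * v) = (0, 0)"
  then have "d * (a * u + b * v) - b * (c * u + d * v) = 0" "a * (c * u + d * v) - c * (a * u + b * v) = 0"
    by auto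
  then have "(a * d - b * c) * u = 0" "(a * d - b * c) * v = 0" by (simp_all add: algebra_simps)
  with assms show False by simp
qed

lemma pact_compose:
  assumes "z \<in> P1" "a * d - b * c \<noteq> 0"
  shows "pact a' b' c' d' (pact a b c d z)
           = pact (a' * a + b' * c) (a' * b + b' * d) (c' * a + d' * c) (c' * b + d' * d) z"
proof -
  obtain u v where z: "z = line_point u v" and uv: "(u, v) \<noteq> (0, 0)"
    using P1_obtain_line_point[OF assms(1)] .
  note image = invertible_image_nonzero[OF assms(2) uv]
  show ?thesis unfolding z pact_line_point[OF uv] pact_line_point[OF image]
    by (simp add: algebra_simps)
qed

lemma pact_id:
  assumes "z \<in> P1"
  shows "pact 1 0 0 1 z = z"
proof -
  obtain u v where "z = line_point u v" "(u, v) \<noteq> (0, 0)"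
    using P1_obtain_line_point[OF assms] .
  then show ?thesis by (simp add: pact_line_point)
qed

lemma square_plus_one_pos: "(x::real)^2 + 1 > 0"
  by (simp add: add_nonneg_pos)

lemma chart_eq: "chart x = Complex ((x^2 - 1) / (x^2 + 1)) (2 * x / (x^2 + 1))"
proof -
  have "x^2 + 1 > 0" by (rule square_plus_one_pos)
  moreover have "(Complex x 1)^2 = Complex (x^2 - 1) (2 * x)"
    by (simp add: complex_eq_iff power2_eq_square)
  moreover have "(cmod (Complex x 1))^2 = x^2 + 1" by (simp add: cmod_def)
  ultimately show ?thesis unfolding chart_def line_point_def
    by (simp add: complex_eq_iff Re_divide_of_real Im_divide_of_real)
qed

lemma Re_chart: "Re (chart x) = (x^2 - 1) / (x^2 + 1)"
  and Im_chart: "Im (chart x) = 2 * x / (x^2 + 1)"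
  by (simp_all add: chart_eq)

lemma chart_in_P1: "chart x \<in> P1"
  unfolding chart_def by (rule line_point_in_P1) simp

lemma pinf_eq_1: "pinf = 1"
proof -
  have "Complex 1 0 = 1" by (simp add: complex_eq_iff)
  then show ?thesis unfolding pinf_def line_point_def by simp
qed

lemma chart_neq_1: "chart x \<noteq> 1"
proof
  assume "chart x = 1"
  then have "(x^2 - 1) / (x^2 + 1) = 1" using Re_chart[of x] by simp
  moreover have "x^2 + 1 > 0" by (rule square_plus_one_pos)
  ultimately show False by (simp add: field_simps)
qed

lemma chart_coord_chart: "chart_coord (chart x) = x"
proof -
  have pos: "x^2 + 1 > 0" by (rule square_plus_one_pos)
  then have "1 - (x^2 - 1) / (x^2 + 1) = 2 / (x^2 + 1)" by (simp add: field_simps)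
  then show ?thesis unfolding chart_coord_def Re_chart Im_chart using pos by (simp add: field_simps)
qed

lemma chart_eq_iff [simp]: "chart x = chart y \<longleftrightarrow> x = y"
  by (metis chart_coord_chart)

lemma chart_in_image_iff [simp]: "chart x \<in> chart ` S \<longleftrightarrow> x \<in> S"
  by auto

lemma Re_lt_1_if_P1:
  assumes "z \<in> P1" "z \<noteq> 1"
  shows "Re z < 1"
proof -
  have "cmod z = 1" using assms by (simp add: P1_def)
  then have circle: "(Re z)^2 + (Im z)^2 = 1" and "Re z \<le> 1"
    using abs_Re_le_cmod[of z] by (auto simp: cmod_def)
  moreover have "Re z \<noteq> 1"
  proof
    assume "Re z = 1"
    with circle have "Im z = 0" by simp
    with \<open>Re z = 1\<close> assms(2) show False by (simp add: complex_eq_iff)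
  qed
  ultimately show ?thesis by simp
qed

lemma chart_chart_coord:
  assumes "z \<in> P1" "z \<noteq> 1"
  shows "chart (chart_coord z) = z"
proof -
  define x where "x = chart_coord z"
  have "cmod z = 1" using assms by (simp add: P1_def)
  then have circle: "(Im z)^2 = (1 - Re z) * (1 + Re z)"
    by (simp add: cmod_def algebra_simps power2_eq_square)
  have pos: "1 - Re z > 0" using Re_lt_1_if_P1[OF assms] by simp
  have x: "x * (1 - Re z) = Im z" using pos by (simp add: x_def chart_coord_def)
  have "(x^2 + 1) * (1 - Re z)^2 = (x * (1 - Re z))^2 + (1 - Re z)^2"
    by (simp add: algebra_simps power2_eq_square)
  also have "\<dots> = 2 * (1 - Re z)"
    unfolding x circle by (simp add: algebra_simps power2_eq_square)
  finally have "((x^2 + 1) * (1 - Re z) - 2) * (1 - Re z) = 0"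
    by (simp add: algebra_simps power2_eq_square)
  then have norm: "(x^2 + 1) * (1 - Re z) = 2" using pos by simp
  then have "(x^2 - 1) / (x^2 + 1) = Re z"
    using pos square_plus_one_pos[of x] by (simp add: field_simps)
  moreover have "2 * x = (x * (1 - Re z)) * (x^2 + 1)"
    using norm by (metis mult.commute mult.left_commute)
  then have "2 * x / (x^2 + 1) = Im z"
    using x square_plus_one_pos[of x] by (simp add: field_simps)
  ultimately show ?thesis unfolding x_def[symmetric] chart_eq by (simp add: complex_eq_iff)
qed

lemma P1_eq_insert_range_chart: "P1 = insert 1 (range chart)"
proof
  show "P1 \<subseteq> insert 1 (range chart)" using chart_chart_coord by (metis insertCI rangeI subsetI)
  show "insert 1 (range chart) \<subseteq> P1" using chart_in_P1 by (auto simp: P1_def)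
qed

lemma pact_chart:
  assumes "c * x + d \<noteq> 0"
  shows "pact a b c d (chart x) = chart (moebius_real a b c d x)"
proof -
  have "pact a b c d (chart x) = line_point (a * x + b) (c * x + d)"
    unfolding chart_def by (subst pact_line_point) (auto simp: algebra_simps)
  also have "\<dots> = line_point ((c * x + d) * moebius_real a b c d x) ((c * x + d) * 1)"
    using assms by (simp add: moebius_real_def)
  also have "\<dots> = chart (moebius_real a b c d x)" unfolding chart_def by (rule line_point_scale[OF assms])
  finally show ?thesis .
qed

lemma continuous_on_chart: "continuous_on S chart"
proof -
  have chart: "chart = (\<lambda>x. of_real ((x^2 - 1) / (x^2 + 1)) + \<i> * of_real (2 * x / (x^2 + 1)))"
    by (simp add: fun_eq_iff complex_eq_iff chart_eq)
  have "x^2 + 1 \<noteq> 0" for x :: real using square_plus_one_pos[of x] by simp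
  then show ?thesis unfolding chart by (intro continuous_intros) auto
qed

lemma continuous_on_chart_coord: "continuous_on (P1 - {1}) chart_coord"
proof -
  have "\<forall>z\<in>P1 - {1}. 1 - Re z \<noteq> 0" using Re_lt_1_if_P1 by fastforce
  then show ?thesis unfolding chart_coord_def by (intro continuous_intros) auto
qed

lemma openin_chart_image:
  assumes "open S"
  shows "openin (top_of_set P1) (chart ` S)"
proof -
  have "chart ` S = (P1 - {1}) \<inter> chart_coord -` S"
    using chart_chart_coord chart_coord_chart chart_in_P1 chart_neq_1 by (auto, metis image_eqI)
  moreover have "openin (top_of_set (P1 - {1})) ((P1 - {1}) \<inter> chart_coord -` S)"
    by (rule continuous_openin_preimage_gen[OF continuous_on_chart_coord assms])
  moreover have "openin (top_of_set P1) (P1 - {1})"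
    by (rule openin_delete) (rule openin_subtopology_self)
  ultimately show ?thesis using openin_trans by metis
qed

lemma closed_chart_image_Icc: "closed (chart ` {a..b})"
  by (intro compact_imp_closed compact_continuous_image continuous_on_chart compact_Icc)

lemma closed_P1: "closed P1"
  unfolding P1_def by simp

section \<open>Hyperbolic elements of \<open>PSL\<^sub>2(\<int>)\<close> acting on an arc\<close>

text \<open>The last condition says that neither the matrix nor its inverse \<open>(d, -b; -c, a)\<close>
  has a pole on \<open>[u1, u2]\<close>.\<close>

definition hyperbolic_arc :: "int \<Rightarrow> int \<Rightarrow> int \<Rightarrow> int \<Rightarrow> real \<Rightarrow> real \<Rightarrow> bool" where
  "hyperbolic_arc a b c d u1 u2 \<longleftrightarrow> a * d - b * c = 1 \<and> \<bar>a + d\<bar> > 2 \<and> u1 < u2 \<and>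
     moebius_int a b c d u1 = u1 \<and> moebius_int a b c d u2 = u2 \<and>
     (\<forall>x\<in>{u1..u2}. of_int c * x + of_int d \<noteq> 0 \<and> - of_int c * x + of_int a \<noteq> 0)"

lemma hyperbolic_arc_det:
  "hyperbolic_arc a b c d u1 u2 \<Longrightarrow> real_of_int a * of_int d - of_int b * of_int c = 1"
  unfolding hyperbolic_arc_def by (metis of_int_1 of_int_diff of_int_mult)

lemma hyperbolic_arc_less: "hyperbolic_arc a b c d u1 u2 \<Longrightarrow> u1 < u2"
  unfolding hyperbolic_arc_def by simp

lemma moebius_real_fixed_point_inverse:
  fixes a b c d u :: real
  assumes "moebius_real a b c d u = u" "c * u + d \<noteq> 0" "- c * u + a \<noteq> 0"
  shows "moebius_real d (- b) (- c) a u = u"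
proof -
  from assms have "a * u + b = u * (c * u + d)" by (simp add: moebius_real_def field_simps)
  then have "d * u - b = u * (- c * u + a)" by (simp add: algebra_simps)
  then show ?thesis using assms by (simp add: moebius_real_def field_simps)
qed

lemma hyperbolic_arc_inverse:
  assumes "hyperbolic_arc a b c d u1 u2"
  shows "hyperbolic_arc d (- b) (- c) a u1 u2"
  using assms moebius_real_fixed_point_inverse[of "of_int a" "of_int b" "of_int c" "of_int d"]
  unfolding hyperbolic_arc_def by (auto simp: algebra_simps)

lemma moebius_int_mirror: "moebius_int a (- b) (- c) d x = - moebius_int a b c d (- x)"
  unfolding moebius_real_def by (simp add: minus_divide_left algebra_simps)

lemma hyperbolic_arc_mirror:
  assumes "hyperbolic_arc a b c d u1 u2"
  shows "hyperbolic_arc a (- b) (- c) d (- u2) (- u1)"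
proof -
  have "of_int (- c) * x + of_int d \<noteq> 0 \<and> - of_int (- c) * x + of_int a \<noteq> 0"
    if "x \<in> {- u2..- u1}" for x :: real
  proof -
    from that have "- x \<in> {u1..u2}" by auto
    then have "of_int c * (- x) + of_int d \<noteq> 0 \<and> - of_int c * (- x) + of_int a \<noteq> 0"
      using assms unfolding hyperbolic_arc_def by blast
    then show ?thesis by simp
  qed
  then show ?thesis using assms unfolding hyperbolic_arc_def moebius_int_mirror by auto
qed

lemma affine_same_sign_on_interval:
  fixes c d x y u1 u2 :: real
  assumes no_root: "\<forall>z\<in>{u1..u2}. c * z + d \<noteq> 0" and "x \<in> {u1..u2}" "y \<in> {u1..u2}"
  shows "(c * x + d) * (c * y + d) > 0"
proof (rule ccontr)
  assume "\<not> ?thesis"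
  moreover have "c * x + d \<noteq> 0" "c * y + d \<noteq> 0" using no_root assms by auto
  ultimately have neg: "(c * x + d) * (c * y + d) < 0"
    by (simp add: not_less) (metis mult_eq_0_iff order_le_less)
  then have "c \<noteq> 0" by (auto simp: not_square_less_zero)
  define z0 where "z0 = - d / c"
  have "(c * x + d) * (c * y + d) = c^2 * ((x - z0) * (y - z0))"
    using \<open>c \<noteq> 0\<close> by (simp add: z0_def field_simps power2_eq_square)
  with neg have "(x - z0) * (y - z0) < 0" by (simp add: mult_less_0_iff)
  then have "z0 \<in> {u1..u2}" using assms by (auto simp: mult_less_0_iff)
  with no_root have "c * z0 + d \<noteq> 0" by (rule bspec)
  then show False using \<open>c \<noteq> 0\<close> by (simp add: z0_def)
qed

lemma moebius_real_strict_mono_on: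
  fixes a b c d :: real
  assumes "\<forall>z\<in>{u1..u2}. c * z + d \<noteq> 0" "a * d - b * c = 1"
    and "x \<in> {u1..u2}" "y \<in> {u1..u2}" "x < y"
  shows "moebius_real a b c d x < moebius_real a b c d y"
proof -
  have pos: "(c * x + d) * (c * y + d) > 0" by (rule affine_same_sign_on_interval[OF assms(1,3,4)])
  then have "c * x + d \<noteq> 0" "c * y + d \<noteq> 0" by auto
  then have "moebius_real a b c d y - moebius_real a b c d x
               = (y - x) * (a * d - b * c) / ((c * x + d) * (c * y + d))"
    by (simp add: moebius_real_def field_simps)
  also have "\<dots> > 0" using pos assms(2,5) by simp
  finally show ?thesis by simp
qed

lemma hyperbolic_arc_moebius_mem:
  assumes "hyperbolic_arc a b c d u1 u2" "x \<in> {u1<..<u2}"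
  shows "moebius_int a b c d x \<in> {u1<..<u2}"
proof -
  have "\<forall>z\<in>{u1..u2}. of_int c * z + of_int d \<noteq> 0"
    and "moebius_int a b c d u1 = u1" "moebius_int a b c d u2 = u2"
    using assms(1) unfolding hyperbolic_arc_def by auto
  moreover note mono = moebius_real_strict_mono_on[OF _ hyperbolic_arc_det[OF assms(1)]]
  ultimately have "u1 < moebius_int a b c d x" "moebius_int a b c d x < u2"
    using mono[of u1 u2 u1 x] mono[of u1 u2 x u2] assms(2) by auto
  then show ?thesis by simp
qed

lemma hyperbolic_arc_pact_chart:
  assumes "hyperbolic_arc a b c d u1 u2" "x \<in> {u1..u2}"
  shows "pact_int a b c d (chart x) = chart (moebius_int a b c d x)"
  using assms pact_chart unfolding hyperbolic_arc_def by auto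

lemma hyperbolic_arc_pact_endpoints:
  assumes "hyperbolic_arc a b c d u1 u2"
  shows "pact_int a b c d (chart u1) = chart u1" "pact_int a b c d (chart u2) = chart u2"
  using assms hyperbolic_arc_pact_chart[OF assms] hyperbolic_arc_less[OF assms]
  unfolding hyperbolic_arc_def by auto

lemma hyperbolic_arc_endpoints_in_P_Z:
  assumes "hyperbolic_arc a b c d u1 u2"
  shows "chart u1 \<in> P_Z" "chart u2 \<in> P_Z"
  using assms hyperbolic_arc_pact_endpoints[OF assms] chart_in_P1
  unfolding P_Z_def hyperbolic_arc_def by blast+

lemma hyperbolic_arc_pact_image:
  assumes "hyperbolic_arc a b c d u1 u2" "z \<in> chart ` {u1<..<u2}"
  shows "pact_int a b c d z \<in> chart ` {u1<..<u2}"
  using assms hyperbolic_arc_moebius_mem hyperbolic_arc_pact_chart by fastforce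

lemma hyperbolic_arc_pact_inverse:
  assumes "hyperbolic_arc a b c d u1 u2" "z \<in> P1"
  shows "pact_int d (- b) (- c) a (pact_int a b c d z) = z"
proof -
  have "pact_int d (- b) (- c) a (pact_int a b c d z) = pact 1 0 0 1 z"
    using hyperbolic_arc_det[OF assms(1)] by (subst pact_compose[OF assms(2)]) (simp_all add: algebra_simps)
  then show ?thesis using pact_id[OF assms(2)] by simp
qed

lemma continuous_on_hyperbolic_arc:
  assumes "hyperbolic_arc a b c d u1 u2"
  shows "continuous_on (chart ` {u1..u2}) (pact_int a b c d)"
proof (rule continuous_on_eq)
  have "\<forall>z\<in>{u1..u2}. of_int c * z + of_int d \<noteq> 0" using assms unfolding hyperbolic_arc_def by auto
  then have "continuous_on {u1..u2} (moebius_int a b c d)"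
    unfolding moebius_real_def by (intro continuous_intros) auto
  moreover have "continuous_on (chart ` {u1..u2}) chart_coord"
    by (rule continuous_on_subset[OF continuous_on_chart_coord]) (use chart_in_P1 chart_neq_1 in auto)
  moreover have "chart_coord ` chart ` {u1..u2} = {u1..u2}"
    by (force simp: chart_coord_chart image_image)
  ultimately show "continuous_on (chart ` {u1..u2}) (chart \<circ> moebius_int a b c d \<circ> chart_coord)"
    by (metis continuous_on_chart continuous_on_compose)
  show "(chart \<circ> moebius_int a b c d \<circ> chart_coord) z = pact_int a b c d z" if "z \<in> chart ` {u1..u2}" for z
    using that hyperbolic_arc_pact_chart[OF assms] by (auto simp: chart_coord_chart)
qed

section \<open>Gluing two arc maps into an element of \<open>H(\<int>)\<close>\<close>

definition two_arc_map ::
    "(complex \<Rightarrow> complex) \<Rightarrow> (complex \<Rightarrow> complex) \<Rightarrow> real \<Rightarrow> real \<Rightarrow> real \<Rightarrow> real \<Rightarrow> complex \<Rightarrow> complex" where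
  "two_arc_map fR fL l1 l2 r1 r2 z =
     (if z \<in> chart ` {r1<..<r2} then fR z else if z \<in> chart ` {l1<..<l2} then fL z else z)"

lemma two_arc_map_chart:
  "two_arc_map fR fL l1 l2 r1 r2 (chart x) =
     (if x \<in> {r1<..<r2} then fR (chart x) else if x \<in> {l1<..<l2} then fL (chart x) else chart x)"
  by (simp add: two_arc_map_def)

lemma two_arc_map_outside:
  "z \<notin> chart ` {r1<..<r2} \<union> chart ` {l1<..<l2} \<Longrightarrow> two_arc_map fR fL l1 l2 r1 r2 z = z"
  by (simp add: two_arc_map_def)

lemma continuous_on_two_arc_map:
  assumes "l2 < r1"
    and cont_R: "continuous_on (chart ` {r1..r2}) fR" and "fR (chart r1) = chart r1" "fR (chart r2) = chart r2"
    and cont_L: "continuous_on (chart ` {l1..l2}) fL" and "fL (chart l1) = chart l1" "fL (chart l2) = chart l2"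
  shows "continuous_on P1 (two_arc_map fR fL l1 l2 r1 r2)"
proof -
  let ?g = "two_arc_map fR fL l1 l2 r1 r2"
  define rest where "rest = P1 - (chart ` {r1<..<r2} \<union> chart ` {l1<..<l2})"
  have "closedin (top_of_set P1) rest"
    unfolding rest_def by (intro closedin_diff closedin_subtopology_refl openin_Un openin_chart_image) auto
  then have closed_rest: "closed rest" using closedin_closed_trans closed_P1 by blast
  have cover: "P1 = chart ` {r1..r2} \<union> chart ` {l1..l2} \<union> rest"
    using chart_in_P1 by (auto simp: rest_def)
  have "continuous_on (chart ` {r1..r2}) ?g"
  proof (rule continuous_on_eq[OF cont_R])
    fix z assume "z \<in> chart ` {r1..r2}"
    then obtain x where "z = chart x" "r1 \<le> x" "x \<le> r2" by auto
    then show "fR z = ?g z" using assms by (cases "x = r1 \<or> x = r2") (auto simp: two_arc_map_chart)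
  qed
  moreover have "continuous_on (chart ` {l1..l2}) ?g"
  proof (rule continuous_on_eq[OF cont_L])
    fix z assume "z \<in> chart ` {l1..l2}"
    then obtain x where "z = chart x" "l1 \<le> x" "x \<le> l2" by auto
    then show "fL z = ?g z" using assms by (cases "x = l1 \<or> x = l2") (auto simp: two_arc_map_chart)
  qed
  moreover have "continuous_on rest ?g"
    by (rule continuous_on_eq[OF continuous_on_id]) (simp add: rest_def two_arc_map_outside)
  ultimately have "continuous_on (chart ` {r1..r2} \<union> chart ` {l1..l2} \<union> rest) ?g"
    by (intro continuous_on_closed_Un closed_Un closed_rest closed_chart_image_Icc)
  then show ?thesis using cover by simp
qed

lemma two_arc_map_in_P1:
  assumes "\<And>z. z \<in> chart ` {r1<..<r2} \<Longrightarrow> fR z \<in> P1" "\<And>z. z \<in> chart ` {l1<..<l2} \<Longrightarrow> fL z \<in> P1"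
    and "z \<in> P1"
  shows "two_arc_map fR fL l1 l2 r1 r2 z \<in> P1"
  using assms unfolding two_arc_map_def by auto

lemma two_arc_map_inverse:
  assumes "l2 < r1"
    and maps_R: "\<And>z. z \<in> chart ` {r1<..<r2} \<Longrightarrow> fR z \<in> chart ` {r1<..<r2}"
    and maps_L: "\<And>z. z \<in> chart ` {l1<..<l2} \<Longrightarrow> fL z \<in> chart ` {l1<..<l2}"
    and inv_R: "\<And>z. z \<in> chart ` {r1<..<r2} \<Longrightarrow> gR (fR z) = z"
    and inv_L: "\<And>z. z \<in> chart ` {l1<..<l2} \<Longrightarrow> gL (fL z) = z"
  shows "two_arc_map gR gL l1 l2 r1 r2 (two_arc_map fR fL l1 l2 r1 r2 z) = z"
proof -
  have disjoint: "chart ` {r1<..<r2} \<inter> chart ` {l1<..<l2} = {}" using assms(1) by auto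
  show ?thesis
  proof (cases "z \<in> chart ` {r1<..<r2}")
    case True
    then show ?thesis using maps_R inv_R unfolding two_arc_map_def by auto
  next
    case not_R: False
    show ?thesis
    proof (cases "z \<in> chart ` {l1<..<l2}")
      case True
      then have "fL z \<notin> chart ` {r1<..<r2}" using maps_L disjoint by blast
      then show ?thesis using True not_R maps_L inv_L unfolding two_arc_map_def by auto
    next
      case False
      then show ?thesis using not_R unfolding two_arc_map_def by auto
    qed
  qed
qed

lemma homeomorphism_two_arc_map:
  assumes R: "hyperbolic_arc aR bR cR dR r1 r2" and L: "hyperbolic_arc aL bL cL dL l1 l2"
    and "l2 < r1"
  shows "homeomorphism P1 P1
           (two_arc_map (pact_int aR bR cR dR) (pact_int aL bL cL dL) l1 l2 r1 r2)
           (two_arc_map (pact_int dR (- bR) (- cR) aR) (pact_int dL (- bL) (- cL) aL) l1 l2 r1 r2)"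
proof -
  note R' = hyperbolic_arc_inverse[OF R] and L' = hyperbolic_arc_inverse[OF L]
  have arcs_in_P1: "chart ` S \<subseteq> P1" for S using chart_in_P1 by auto
  have inv_R': "pact_int aR bR cR dR (pact_int dR (- bR) (- cR) aR z) = z"
    and inv_L': "pact_int aL bL cL dL (pact_int dL (- bL) (- cL) aL z) = z" if "z \<in> P1" for z
    using hyperbolic_arc_pact_inverse[OF R' that] hyperbolic_arc_pact_inverse[OF L' that] by simp_all
  show ?thesis
  proof (rule homeomorphismI)
    show "continuous_on P1 (two_arc_map (pact_int aR bR cR dR) (pact_int aL bL cL dL) l1 l2 r1 r2)"
      using assms(3) continuous_on_hyperbolic_arc[OF R] hyperbolic_arc_pact_endpoints[OF R]
        continuous_on_hyperbolic_arc[OF L] hyperbolic_arc_pact_endpoints[OF L]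
      by (rule continuous_on_two_arc_map)
    show "continuous_on P1 (two_arc_map (pact_int dR (- bR) (- cR) aR) (pact_int dL (- bL) (- cL) aL) l1 l2 r1 r2)"
      using assms(3) continuous_on_hyperbolic_arc[OF R'] hyperbolic_arc_pact_endpoints[OF R']
        continuous_on_hyperbolic_arc[OF L'] hyperbolic_arc_pact_endpoints[OF L']
      by (rule continuous_on_two_arc_map)
    show "two_arc_map (pact_int aR bR cR dR) (pact_int aL bL cL dL) l1 l2 r1 r2 ` P1 \<subseteq> P1"
      using two_arc_map_in_P1 hyperbolic_arc_pact_image[OF R] hyperbolic_arc_pact_image[OF L] arcs_in_P1
      by (smt (verit) image_subset_iff subset_iff)
    show "two_arc_map (pact_int dR (- bR) (- cR) aR) (pact_int dL (- bL) (- cL) aL) l1 l2 r1 r2 ` P1 \<subseteq> P1"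
      using two_arc_map_in_P1 hyperbolic_arc_pact_image[OF R'] hyperbolic_arc_pact_image[OF L'] arcs_in_P1
      by (smt (verit) image_subset_iff subset_iff)
    show "two_arc_map (pact_int dR (- bR) (- cR) aR) (pact_int dL (- bL) (- cL) aL) l1 l2 r1 r2
            (two_arc_map (pact_int aR bR cR dR) (pact_int aL bL cL dL) l1 l2 r1 r2 z) = z" for z
      by (rule two_arc_map_inverse[OF assms(3)])
        (use hyperbolic_arc_pact_image[OF R] hyperbolic_arc_pact_image[OF L]
           hyperbolic_arc_pact_inverse[OF R] hyperbolic_arc_pact_inverse[OF L] arcs_in_P1 in blast)+
    show "two_arc_map (pact_int aR bR cR dR) (pact_int aL bL cL dL) l1 l2 r1 r2
            (two_arc_map (pact_int dR (- bR) (- cR) aR) (pact_int dL (- bL) (- cL) aL) l1 l2 r1 r2 z) = z" for z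
      by (rule two_arc_map_inverse[OF assms(3)])
        (use hyperbolic_arc_pact_image[OF R'] hyperbolic_arc_pact_image[OF L'] inv_R' inv_L' arcs_in_P1 in blast)+
  qed
qed

lemma component_in_two_arc_piece:
  assumes "l2 < r1" and C: "C \<in> components (P1 - chart ` {l1, l2, r1, r2})"
  shows "C \<subseteq> chart ` {r1<..<r2} \<or> C \<subseteq> chart ` {l1<..<l2} \<or>
         C \<subseteq> P1 - (chart ` {r1..r2} \<union> chart ` {l1..l2})"
proof -
  let ?X = "top_of_set P1"
  define AR where "AR = chart ` {r1<..<r2}"
  define AL where "AL = chart ` {l1<..<l2}"
  define AO where "AO = P1 - (chart ` {r1..r2} \<union> chart ` {l1..l2})"
  have open_R: "openin ?X AR" and open_L: "openin ?X AL"
    unfolding AR_def AL_def by (simp_all add: openin_chart_image)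
  have "closedin ?X (chart ` {r1..r2} \<union> chart ` {l1..l2})"
    by (rule closed_subset) (use chart_in_P1 closed_chart_image_Icc in auto)
  then have open_O: "openin ?X AO" unfolding AO_def by (rule openin_diff[OF openin_subtopology_self])
  have C_sub: "C \<subseteq> P1 - chart ` {l1, l2, r1, r2}" by (rule in_components_subset[OF C])
  then have "C \<subseteq> P1" by blast
  then have "connectedin ?X C"
    using in_components_connected[OF C] by (simp add: connectedin_subtopology)
  moreover have "C \<subseteq> AR \<union> (AL \<union> AO)"
    using C_sub by (auto simp: AR_def AL_def AO_def)
  moreover have "separatedin ?X AR (AL \<union> AO)" "separatedin ?X AL AO"
    using open_R open_L open_O assms(1)
    by (auto simp: separatedin_open_sets disjnt_def AR_def AL_def AO_def)
  ultimately show ?thesis unfolding AR_def [symmetric] AL_def [symmetric] AO_def [symmetric]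
    by (metis connectedin_subset_separated_union)
qed

lemma two_arc_map_in_H_Z:
  assumes R: "hyperbolic_arc aR bR cR dR r1 r2" and L: "hyperbolic_arc aL bL cL dL l1 l2"
    and "l2 < r1"
  shows "two_arc_map (pact_int aR bR cR dR) (pact_int aL bL cL dL) l1 l2 r1 r2 \<in> H_Z"
proof -
  let ?g = "two_arc_map (pact_int aR bR cR dR) (pact_int aL bL cL dL) l1 l2 r1 r2"
  have piece: "\<exists>a b c d :: int. a * d - b * c = 1 \<and> (\<forall>z \<in> C. ?g z = pact_int a b c d z)"
    if "C \<in> components (P1 - chart ` {l1, l2, r1, r2})" for C
    using component_in_two_arc_piece[OF assms(3) that]
  proof (elim disjE)
    assume "C \<subseteq> chart ` {r1<..<r2}"
    then have "\<forall>z\<in>C. ?g z = pact_int aR bR cR dR z" by (auto simp: two_arc_map_def)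
    then show ?thesis using R unfolding hyperbolic_arc_def by blast
  next
    assume "C \<subseteq> chart ` {l1<..<l2}"
    then have "\<forall>z\<in>C. ?g z = pact_int aL bL cL dL z" using assms(3) by (auto simp: two_arc_map_def)
    then show ?thesis using L unfolding hyperbolic_arc_def by blast
  next
    assume outside: "C \<subseteq> P1 - (chart ` {r1..r2} \<union> chart ` {l1..l2})"
    have "?g z = pact_int 1 0 0 1 z" if "z \<in> C" for z
    proof -
      have "chart ` {r1<..<r2} \<subseteq> chart ` {r1..r2}" "chart ` {l1<..<l2} \<subseteq> chart ` {l1..l2}"
        by (auto intro!: image_mono)
      then have "z \<notin> chart ` {r1<..<r2} \<union> chart ` {l1<..<l2}" "z \<in> P1"
        using outside that by blast+
      then show ?thesis by (simp add: two_arc_map_outside pact_id)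
    qed
    then show ?thesis by (intro exI[of _ 1] exI[of _ 0]) auto
  qed
  have "chart ` {l1, l2, r1, r2} \<subseteq> P_Z"
    using hyperbolic_arc_endpoints_in_P_Z[OF R] hyperbolic_arc_endpoints_in_P_Z[OF L] by auto
  moreover have "finite (chart ` {l1, l2, r1, r2})" by simp
  ultimately have "?g \<in> G_Z"
    using homeomorphism_two_arc_map[OF assms] piece unfolding G_Z_def
    by (intro CollectI conjI exI[of _ "chart ` {l1, l2, r1, r2}"]) blast+
  moreover have "?g pinf = pinf"
    using chart_neq_1 by (auto simp: pinf_eq_1 two_arc_map_def)
  ultimately show ?thesis unfolding H_Z_def by blast
qed

section \<open>A hyperbolic element pushing a half-line towards infinity\<close>

lemma quadratic_root_between:
  fixes T e :: real
  assumes "T \<ge> 3" "0 < e" "e \<le> 1/16"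
  obtains y where "e < y" "y < 2 * e" "y^2 - T * y + T * e = 0"
proof -
  let ?q = "\<lambda>y. y^2 - T * y + T * e"
  have "?q (2 * e) = e * (4 * e - T)" by (simp add: power2_eq_square algebra_simps)
  also have "\<dots> < 0" using assms by (simp add: mult_pos_neg)
  finally have neg: "?q (2 * e) < 0" .
  have pos: "?q e > 0" using assms by simp
  have "continuous_on {e..2 * e} ?q" by (intro continuous_intros)
  then obtain y where y: "e \<le> y" "y \<le> 2 * e" "?q y = 0"
    using IVT2'[of ?q "2 * e" 0 e] neg pos assms(2) by auto
  then have "y \<noteq> e" "y \<noteq> 2 * e" using neg pos by auto
  with y show ?thesis using that[of y] by simp
qed

text \<open>The matrix below is the conjugate, by the translation by \<open>K\<close>, of the parabolic map
  \<open>y \<mapsto> y / (1 - M\<^sup>2 y)\<close> followed by the translation by \<open>T\<close>.\<close>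

lemma moebius_real_translated_parabolic:
  fixes K T M x :: real
  assumes "1 - M^2 * (x - K) \<noteq> 0"
  shows "moebius_real (1 - K * M^2 - T * M^2) (K^2 * M^2 + T * (K * M^2 + 1)) (- (M^2)) (K * M^2 + 1) x
           = K + T + (x - K) / (1 - M^2 * (x - K))"
  using assms unfolding moebius_real_def
  by (simp add: field_simps) (simp add: algebra_simps power2_eq_square)

lemma parabolic_translation_fixed_point:
  fixes M T e z :: real
  assumes "M^2 * e = 1" "z^2 - T * z + T * e = 0" "1 - M^2 * z \<noteq> 0"
  shows "T + z / (1 - M^2 * z) = z"
proof -
  have "M^2 * (z^2 - T * z + T * e) = 0" using assms(2) by simp
  then have "M^2 * z^2 - T * M^2 * z + T = 0" using assms(1) by (simp add: algebra_simps)
  then have "(T - z) * (1 - M^2 * z) + z = 0" by (simp add: algebra_simps power2_eq_square)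
  then show ?thesis using assms(3) by (simp add: field_simps)
qed

lemma parabolic_lower_bound:
  fixes M u :: real
  assumes "M \<ge> 4" "3 / M \<le> u"
  shows "1 < M^2 * u" "-1 \<le> u / (1 - M^2 * u)"
proof -
  have "0 < 3 / M" using assms(1) by simp
  then have "0 \<le> u" using assms(2) by linarith
  have "3 * M \<le> M^2 * u" using assms by (simp add: field_simps power2_eq_square)
  then have big: "12 \<le> M^2 * u" using assms(1) by simp
  then show "1 < M^2 * u" by simp
  have "16 \<le> M^2" using assms(1) power_mono[of 4 M 2] by simp
  then have "16 * u \<le> M^2 * u" using \<open>0 \<le> u\<close> by (rule mult_right_mono)
  then have "u \<le> M^2 * u - 1" using big by simp
  then show "-1 \<le> u / (1 - M^2 * u)" using big by (simp add: field_simps)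
qed

lemma moebius_real_bump:
  fixes M K T :: real
  assumes M: "M \<ge> 4" and T: "T \<ge> 3"
  defines "A \<equiv> 1 - K * M^2 - T * M^2" and "B \<equiv> K^2 * M^2 + T * (K * M^2 + 1)"
    and "C \<equiv> - (M^2)" and "D \<equiv> K * M^2 + 1"
  obtains y where "1 / M^2 < y" "y < 2 / M^2"
    "moebius_real A B C D (K + y) = K + y" "moebius_real A B C D (K + T - y) = K + T - y"
    "\<forall>x\<in>{K + y..K + T - y}. C * x + D \<noteq> 0 \<and> - C * x + A \<noteq> 0"
    "\<forall>x \<ge> K + 3 / M. K + T - 1 \<le> moebius_real A B C D x"
proof -
  define e where "e = 1 / M^2"
  have M16: "M^2 \<ge> 16" using M power_mono[of 4 M 2] by simp
  have Me: "M^2 * e = 1" using M by (simp add: e_def)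
  have e: "0 < e" "e \<le> 1/16" using M M16 by (simp_all add: e_def divide_simps)
  have e_less_iff: "e < u \<longleftrightarrow> 1 < M^2 * u" for u
    using Me M mult_less_cancel_left_pos[of "M^2" e u] by simp
  obtain y where y: "e < y" "y < 2 * e" "y^2 - T * y + T * e = 0"
    using quadratic_root_between[OF T e] .
  have formula: "moebius_real A B C D x = K + T + (x - K) / (1 - M^2 * (x - K))"
    if "e < x - K" for x
    unfolding A_def B_def C_def D_def using that e_less_iff
    by (intro moebius_real_translated_parabolic) simp
  have fixed: "moebius_real A B C D (K + z) = K + z" if "e < z" "z^2 - T * z + T * e = 0" for z
    using formula[of "K + z"] parabolic_translation_fixed_point[OF Me that(2)] that(1) e_less_iff
    by simp
  have "e < T - y" "(T - y)^2 - T * (T - y) + T * e = 0"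
    using y e T by (auto simp: power2_eq_square algebra_simps)
  then have fixed_right: "moebius_real A B C D (K + T - y) = K + T - y"
    using fixed[of "T - y"] by (simp add: add_diff_eq)
  have no_poles: "C * x + D \<noteq> 0 \<and> - C * x + A \<noteq> 0" if "x \<in> {K + y..K + T - y}" for x
  proof -
    have "C * x + D = 1 - M^2 * (x - K)" "- C * x + A = M^2 * (x - K - T) + 1"
      unfolding A_def C_def D_def by (simp_all add: algebra_simps)
    moreover have "1 < M^2 * (x - K)" using that y(1) e_less_iff[of "x - K"] by simp
    moreover have "M^2 * (x - K - T) < M^2 * (- e)"
      using that y(1) M by (intro mult_strict_left_mono) auto
    ultimately show ?thesis using Me by simp
  qed
  have push: "K + T - 1 \<le> moebius_real A B C D x" if "K + 3 / M \<le> x" for x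
    using parabolic_lower_bound[OF M, of "x - K"] that formula[of x] e_less_iff by simp
  show ?thesis
    using that[of y] y fixed[of y] fixed_right no_poles push by (simp add: e_def)
qed

lemma hyperbolic_arc_push_right:
  fixes p0 :: real and n :: nat
  assumes "n \<ge> 1"
  obtains a b c d and r1 r2 :: real
  where "hyperbolic_arc a b c d r1 r2" "p0 < r1" "r1 < p0 + 1 / n" "n \<le> r2"
    "\<forall>x \<ge> p0 + 1 / n. n \<le> moebius_int a b c d x"
proof -
  text \<open>\<open>K\<close> is the first multiple of \<open>1/M\<close> to the right of \<open>p0\<close> and \<open>T\<close> is an integer,
    so that the matrix of the bump has integer entries.\<close>
  define m :: int where "m = 4 * int n"
  define k :: int where "k = \<lfloor>p0 * m\<rfloor> + 1"
  define t :: int where "t = int n + 2 + \<lceil>\<bar>p0\<bar>\<rceil>"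
  define M where "M = real_of_int m"
  define K where "K = k / M"
  define T where "T = real_of_int t"
  have M: "M = 4 * n" "M \<ge> 4" using assms by (simp_all add: M_def m_def)
  have k: "of_int k = K * M" using M by (simp add: K_def)
  have K: "p0 < K" "K \<le> p0 + 1 / M"
    using M by (simp_all add: K_def M_def k_def field_simps) linarith+
  have T: "T \<ge> n + 2 + \<bar>p0\<bar>" using le_of_int_ceiling[of "\<bar>p0\<bar>"] by (simp add: T_def t_def)
  then have T3: "T \<ge> 3" using assms by simp
  define a b c d where "a = 1 - k * m - t * m^2" "b = k^2 + t * (k * m + 1)" "c = - (m^2)" "d = k * m + 1"
  have entries: "of_int a = 1 - K * M^2 - T * M^2" "of_int b = K^2 * M^2 + T * (K * M^2 + 1)"
      "of_int c = - (M^2)" "of_int d = K * M^2 + 1"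
    unfolding a_b_c_d_def by (simp_all add: k M_def T_def power2_eq_square algebra_simps)
  obtain y where y: "1 / M^2 < y" "y < 2 / M^2"
    and arc: "moebius_int a b c d (K + y) = K + y" "moebius_int a b c d (K + T - y) = K + T - y"
      "\<forall>x\<in>{K + y..K + T - y}. of_int c * x + of_int d \<noteq> 0 \<and> - of_int c * x + of_int a \<noteq> 0"
    and push: "\<forall>x \<ge> K + 3 / M. K + T - 1 \<le> moebius_int a b c d x"
    unfolding entries by (rule moebius_real_bump[OF M(2) T3])
  have "a * d - b * c = 1" unfolding a_b_c_d_def by (simp add: power2_eq_square algebra_simps)
  moreover have "\<bar>a + d\<bar> > 2"
  proof -
    have "0 \<le> \<lceil>\<bar>p0\<bar>\<rceil>" by simp
    then have "t \<ge> 3" using assms unfolding t_def by linarith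
    moreover have "m^2 \<ge> 16" using assms power_mono[of 4 m 2] by (simp add: m_def)
    ultimately have "t * m^2 \<ge> 3 * 16" by (intro mult_mono) auto
    then show ?thesis by (simp add: a_b_c_d_def)
  qed
  moreover have n: "1 / real n = 4 / M" and small: "2 / M^2 \<le> 1 / M" "1 / M \<le> 1 / 4"
    using M by (simp_all add: field_simps power2_eq_square)
  moreover have "0 < y" using M y(1) less_trans[of 0 "1 / M^2" y] by simp
  ultimately have "hyperbolic_arc a b c d (K + y) (K + T - y)"
    unfolding hyperbolic_arc_def using arc y T3 by auto
  moreover have "n \<le> moebius_int a b c d x" if "p0 + 1 / n \<le> x" for x
    using push[rule_format, of x] that K T n by force
  ultimately show ?thesis using that[of a b c d "K + y" "K + T - y"] y K T n small by auto
qed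

section \<open>Uniform convergence to \<open>\<infinity>\<close>\<close>

lemma H_Z_push_away_from_point:
  fixes p0 :: real and n :: nat
  assumes "n \<ge> 1"
  obtains g where "g \<in> H_Z" "\<forall>x. 1 / n \<le> \<bar>x - p0\<bar> \<longrightarrow> (\<exists>y::real. g (chart x) = chart y \<and> n \<le> \<bar>y\<bar>)"
proof -
  obtain aR bR cR dR r1 r2 where R: "hyperbolic_arc aR bR cR dR r1 r2"
    and R_pos: "p0 < r1" "r1 < p0 + 1 / n" "real n \<le> r2"
    and R_push: "\<forall>x \<ge> p0 + 1 / n. n \<le> moebius_int aR bR cR dR x"
    by (rule hyperbolic_arc_push_right[OF assms])
  obtain a b c d s1 s2 where S: "hyperbolic_arc a b c d s1 s2"
    and S_pos: "- p0 < s1" "s1 < - p0 + 1 / n" "real n \<le> s2"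
    and S_push: "\<forall>x \<ge> - p0 + 1 / n. n \<le> moebius_int a b c d x"
    by (rule hyperbolic_arc_push_right[OF assms])
  note L = hyperbolic_arc_mirror[OF S]
  let ?g = "two_arc_map (pact_int aR bR cR dR) (pact_int a (- b) (- c) d) (- s2) (- s1) r1 r2"
  have "\<exists>y::real. ?g (chart x) = chart y \<and> n \<le> \<bar>y\<bar>" if x: "1 / n \<le> \<bar>x - p0\<bar>" for x
  proof (cases "p0 \<le> x")
    case True
    then have x_right: "p0 + 1 / n \<le> x" "\<not> x < - s1" using x R_pos S_pos by auto
    show ?thesis
    proof (cases "x < r2")
      case True
      then have "?g (chart x) = chart (moebius_int aR bR cR dR x)"
        using x_right R_pos hyperbolic_arc_pact_chart[OF R, of x] by (simp add: two_arc_map_chart)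
      moreover have "n \<le> moebius_int aR bR cR dR x" using R_push x_right by simp
      ultimately show ?thesis by (intro exI[of _ "moebius_int aR bR cR dR x"]) simp
    next
      case False
      then show ?thesis using x_right R_pos by (intro exI[of _ x]) (simp add: two_arc_map_chart)
    qed
  next
    case False
    then have x_left: "x \<le> p0 - 1 / n" "\<not> r1 < x" using x R_pos by auto
    show ?thesis
    proof (cases "- s2 < x")
      case True
      then have "x \<in> {- s2<..<- s1}" using x_left S_pos by simp
      then have "?g (chart x) = chart (moebius_int a (- b) (- c) d x)"
        using x_left hyperbolic_arc_pact_chart[OF L, of x] by (simp add: two_arc_map_chart)
      then have "?g (chart x) = chart (- moebius_int a b c d (- x))"
        by (simp only: moebius_int_mirror)
      moreover have "n \<le> moebius_int a b c d (- x)" using S_push x_left by simp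
      ultimately show ?thesis by (intro exI[of _ "- moebius_int a b c d (- x)"]) simp
    next
      case False
      then show ?thesis using x_left S_pos by (intro exI[of _ x]) (simp add: two_arc_map_chart)
    qed
  qed
  moreover have "?g \<in> H_Z" using R L R_pos S_pos by (intro two_arc_map_in_H_Z) simp_all
  ultimately show ?thesis using that by blast
qed

lemma norm_chart_minus_1_le:
  assumes "\<bar>y\<bar> \<ge> 1"
  shows "cmod (chart y - 1) \<le> 4 / \<bar>y\<bar>"
proof -
  have pos: "y^2 + 1 > 0" by (rule square_plus_one_pos)
  have "\<bar>Re (chart y - 1)\<bar> = 2 / (y^2 + 1)" "\<bar>Im (chart y - 1)\<bar> = 2 * \<bar>y\<bar> / (y^2 + 1)"
    using pos by (simp_all add: Re_chart Im_chart field_simps abs_divide abs_mult)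
  then have "cmod (chart y - 1) \<le> (2 + 2 * \<bar>y\<bar>) / (y^2 + 1)"
    using cmod_le[of "chart y - 1"] by (simp add: add_divide_distrib)
  also have "\<dots> \<le> 4 / \<bar>y\<bar>"
  proof -
    have "\<bar>y\<bar> * 1 \<le> \<bar>y\<bar> * \<bar>y\<bar>" using assms by (intro mult_left_mono) auto
    then have "\<bar>y\<bar> \<le> y^2" by (simp add: power2_eq_square abs_mult_self_eq)
    moreover have "(2 + 2 * \<bar>y\<bar>) * \<bar>y\<bar> = 2 * \<bar>y\<bar> + 2 * y^2"
      by (simp add: algebra_simps power2_eq_square abs_mult_self_eq)
    ultimately have "(2 + 2 * \<bar>y\<bar>) * \<bar>y\<bar> \<le> 4 * (y^2 + 1)" by (smt (verit))
    then show ?thesis using pos assms by (simp add: field_simps)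
  qed
  finally show ?thesis .
qed

lemma compact_avoiding_chart_point:
  assumes "compact K" "K \<subseteq> P1 - {chart p0}"
  obtains \<eta> where "\<eta> > 0" "\<forall>x. chart x \<in> K \<longrightarrow> \<eta> \<le> \<bar>x - p0\<bar>"
proof -
  obtain \<delta> where "\<delta> > 0" and far: "\<forall>q\<in>K. \<delta> \<le> dist (chart p0) q"
    using separate_point_closed[OF compact_imp_closed[OF assms(1)], of "chart p0"] assms(2) by blast
  moreover have "isCont chart p0" using continuous_on_chart[of UNIV] continuous_on_eq_continuous_at by blast
  ultimately obtain \<eta> where "\<eta> > 0" and near: "\<forall>x. dist x p0 < \<eta> \<longrightarrow> dist (chart x) (chart p0) < \<delta>"
    unfolding continuous_at_eps_delta by blast
  moreover have "\<eta> \<le> \<bar>x - p0\<bar>" if "chart x \<in> K" for x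
    using near far that by (metis dist_commute dist_real_def not_less)
  ultimately show ?thesis using that by blast
qed

lemma uniform_limit_pinf_if_push:
  assumes fix_pinf: "\<And>n. g n pinf = pinf"
    and push: "\<And>n x. 1 / Suc n \<le> \<bar>x - p0\<bar> \<Longrightarrow> \<exists>y::real. g n (chart x) = chart y \<and> Suc n \<le> \<bar>y\<bar>"
    and K: "compact K" "K \<subseteq> P1 - {chart p0}"
  shows "uniform_limit K g (\<lambda>q. pinf) sequentially"
  unfolding uniform_limit_iff
proof (intro allI impI)
  fix e :: real assume "e > 0"
  obtain \<eta> where "\<eta> > 0" and far: "\<forall>x. chart x \<in> K \<longrightarrow> \<eta> \<le> \<bar>x - p0\<bar>"
    by (rule compact_avoiding_chart_point[OF K])
  obtain N :: nat where N: "1 / \<eta> < N" "4 / e < N"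
    using reals_Archimedean2[of "max (1 / \<eta>) (4 / e)"] by auto
  have "dist (g n q) pinf < e" if n: "N \<le> n" and q_K: "q \<in> K" for n q
  proof -
    have Suc_n: "a / Suc n < c" if "a / c < N" "c > 0" for a c :: real
    proof -
      have "a < c * N" using that by (simp add: field_simps)
      also have "\<dots> \<le> c * Suc n" using n \<open>c > 0\<close> by simp
      finally show ?thesis by (simp add: field_simps)
    qed
    show ?thesis
  proof (cases "q = pinf")
    case True
    then show ?thesis using fix_pinf \<open>e > 0\<close> by simp
  next
    case False
    then obtain x where q: "q = chart x" using K(2) q_K P1_eq_insert_range_chart pinf_eq_1 by auto
    have "1 / Suc n < \<eta>" using Suc_n N(1) \<open>\<eta> > 0\<close> by blast
    then obtain y :: real where y: "g n q = chart y" "Suc n \<le> \<bar>y\<bar>" using push far q q_K by force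
    have "dist (g n q) pinf = cmod (chart y - 1)" by (simp add: y pinf_eq_1 dist_norm)
    also have "\<dots> \<le> 4 / \<bar>y\<bar>" using y(2) by (intro norm_chart_minus_1_le) simp
    also have "\<dots> \<le> 4 / Suc n" using y(2) by (intro divide_left_mono) auto
    also have "\<dots> < e" using Suc_n N(2) \<open>e > 0\<close> by blast
    finally show ?thesis .
  qed
  qed
  then show "\<forall>\<^sub>F n in sequentially. \<forall>q\<in>K. dist (g n q) pinf < e"
    unfolding eventually_sequentially by blast
qed

theorem lemma2:
  assumes "p \<in> P1" and "p \<noteq> pinf"
  shows "\<exists>g :: nat \<Rightarrow> complex \<Rightarrow> complex. (\<forall>n. g n \<in> H_Z) \<and>
           (\<forall>K. compact K \<and> K \<subseteq> P1 - {p} \<longrightarrow>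
                uniform_limit K g (\<lambda>q. pinf) sequentially)"
proof -
  obtain p0 where p: "p = chart p0" using assms P1_eq_insert_range_chart pinf_eq_1 by auto
  have "\<exists>g \<in> H_Z. \<forall>x. 1 / Suc n \<le> \<bar>x - p0\<bar> \<longrightarrow> (\<exists>y::real. g (chart x) = chart y \<and> Suc n \<le> \<bar>y\<bar>)" for n
    by (rule H_Z_push_away_from_point[of "Suc n" p0]) auto
  then obtain g where g: "\<And>n. g n \<in> H_Z"
    and push: "\<And>n x. 1 / Suc n \<le> \<bar>x - p0\<bar> \<Longrightarrow> \<exists>y::real. g n (chart x) = chart y \<and> Suc n \<le> \<bar>y\<bar>"
    by metis
  have "g n pinf = pinf" for n using g[of n] by (simp add: H_Z_def)
  then show ?thesis using g push uniform_limit_pinf_if_push unfolding p by blast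
qed

end
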